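(* Let $n,k,t$ be positive integers with $k\cdot t=\frac{n(n+1)}{2}$ and $t\ge n$. Then the recursive procedure $\Pi\mathit{Solve}$ (defined in the context) terminates on input $(n,k,t)$ and outputs sets $T_1,\ldots,T_k$ which are pairwise disjoint, satisfy $\{1,\ldots,n\}\subseteq \bigcup_{j=1}^k T_j\subseteq\{0,1,\ldots,n\}$, and satisfy $\sum_{x\in T_j}x=t$ for every $1\le j\le k$. Consequently the sets $T_j\setminus\{0\}$, $1\le j\le k$, form a $(k,t)$-partitioning of $\{1,\ldots,n\}$.
   Context: For integers $n,k,t$, a $(k,t)$-partitioning of $\{1,\ldots,n\}$ is a family of $k$ pairwise disjoint sets $T_1,\ldots,T_k$ with union $\{1,\ldots,n\}$ and $\sum_{x\in T_j}x=t$ for all $j$. The procedure $\Pi\mathit{Solve}(n,k,t)$ returns a list of $k$ sets and is defined recursively as follows. (Base cases.) If $k=0$, return the empty list. If $k=1$, return the single set $\{1,\ldots,n\}$ (empty if $n\le 0$). (Case $t\le 2n-1$, $t$ even.) Let $a=\frac{2n-t}{2}$. For $1\le i\le a$ put $T_i=\{t-n+(i-1),\,n-(i-1)\}$. Let $n'=t-n-1$, $k'=2(k-n)+t-1$, $t'=t/2$, and let $(S_1,\ldots,S_{k'})=\Pi\mathit{Solve}(n',k',t')$. Put $T_{a+1}=\{t/2\}\cup S_1$ and, for $2\le m\le k-a$, $T_{a+m}=S_{2m-2}\cup S_{2m-1}$. Return $(T_1,\ldots,T_k)$. (Case $t\le 2n-1$, $t$ odd.) Let $a=\frac{2n-t+1}{2}$.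 For $1\le i\le a$ put $T_i=\{t-n+(i-1),\,n-(i-1)\}$. Let $(S_1,\ldots,S_{k-a})=\Pi\mathit{Solve}(t-n-1,\,k-a,\,t)$ and put $T_{a+m}=S_m$ for $1\le m\le k-a$. Return $(T_1,\ldots,T_k)$. (Case $t\ge 2n$.) Let $(S_1,\ldots,S_k)=\Pi\mathit{Solve}(n-2k,\,k,\,t-2(n-k)-1)$ and put $T_i=\{n-2k+i,\,n-(i-1)\}\cup S_i$ for $1\le i\le k$. Return $(T_1,\ldots,T_k)$. *)

theory Defs
  imports Main
begin

text \<open>The procedure terminates on
  input (n,k,t) with output T iff pisolve n k t T is derivable.  Lists are
  0-indexed: the paper's S_j is S ! (j-1), and the output list is (T_1,...,T_k)
  given as map T [1..k].\<close>

inductive pisolve :: "int \<Rightarrow> int \<Rightarrow> int \<Rightarrow> int set list \<Rightarrow> bool" where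
  base0: "pisolve n 0 t []"
| base1: "pisolve n 1 t [{1..n}]"
| even: "\<lbrakk> k \<noteq> 0; k \<noteq> 1; t \<le> 2*n - 1; even t;
           a = (2*n - t) div 2;
           pisolve (t - n - 1) (2*(k - n) + t - 1) (t div 2) S \<rbrakk> \<Longrightarrow>
         pisolve n k t
           (map (\<lambda>i. if i \<le> a then {t - n + (i - 1), n - (i - 1)}
                     else if i = a + 1 then {t div 2} \<union> S ! 0
                     else S ! nat (2*(i - a) - 3) \<union> S ! nat (2*(i - a) - 2)) [1..k])"
| odd: "\<lbrakk> k \<noteq> 0; k \<noteq> 1; t \<le> 2*n - 1; odd t;
          a = (2*n - t + 1) div 2;
          pisolve (t - n - 1) (k - a) t S \<rbrakk> \<Longrightarrow>
        pisolve n k t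
          (map (\<lambda>i. if i \<le> a then {t - n + (i - 1), n - (i - 1)}
                    else S ! nat (i - a - 1)) [1..k])"
| big: "\<lbrakk> k \<noteq> 0; k \<noteq> 1; t \<ge> 2*n;
          pisolve (n - 2*k) k (t - 2*(n - k) - 1) S \<rbrakk> \<Longrightarrow>
        pisolve n k t
          (map (\<lambda>i. {n - 2*k + i, n - (i - 1)} \<union> S ! nat (i - 1)) [1..k])"

definition kt_partitioning :: "int \<Rightarrow> nat \<Rightarrow> int \<Rightarrow> int set list \<Rightarrow> bool" where
  "kt_partitioning n k t T \<longleftrightarrow>
     length T = k \<and>
     (\<forall>i<k. \<forall>j<k. i \<noteq> j \<longrightarrow> T ! i \<inter> T ! j = {}) \<and>
     \<Union>(set T) = {1..n} \<and>
     (\<forall>j<k. (\<Sum>x\<in>T ! j. x) = t)"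

end

theory Submission
  imports Defs "HOL-Library.Disjoint_Sets"
begin

(*
  Every step of PiSolve splits off parts made of pairs of numbers from the top of {1..n}:
  pairs {x, t - x} when t < 2n, and in the case t \<ge> 2n one pair {n - 2k + i, n - i + 1} of sum
  2n - 2k + 1 for every part. The numbers below the pairs form an instance {1..n'} that is
  solved recursively; for even t the recursive parts have sum t/2 and are merged two at a time,
  with the number t/2 itself completing the odd one out. The identity 2kt = n(n + 1) together
  with t \<ge> n is preserved by every recursive call while n decreases, which gives termination.
  When t = n the pair {t - n, n} = {0, n} occurs, which is why a part may contain 0.
*)

definition sum_partition :: "'i set \<Rightarrow> ('i \<Rightarrow> 'a set) \<Rightarrow> 'a::comm_monoid_add \<Rightarrow> 'a set \<Rightarrow> bool" where
  "sum_partition I f s U \<longleftrightarrow>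
     disjoint_family_on f I \<and> (\<Union>i\<in>I. f i) = U \<and> (\<forall>i\<in>I. finite (f i) \<and> (\<Sum>x\<in>f i. x) = s)"

lemma sum_partition_cong:
  assumes "sum_partition I f s U" and "\<And>i. i \<in> I \<Longrightarrow> f i = g i"
  shows "sum_partition I g s U"
  using assms unfolding sum_partition_def disjoint_family_on_def by auto

lemma sum_partition_reindex:
  assumes "bij_betw h J I" and "sum_partition I f s U"
  shows "sum_partition J (f \<circ> h) s U"
  using assms unfolding sum_partition_def disjoint_family_on_def bij_betw_def inj_on_def
  by (auto simp: image_comp [symmetric]) blast+

lemma sum_partition_Un:
  assumes "sum_partition I f s U" and "sum_partition J g s V"
    and "I \<inter> J = {}" and "U \<inter> V = {}"
  shows "sum_partition (I \<union> J) (\<lambda>i. if i \<in> I then f i else g i) s (U \<union> V)"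
  using assms unfolding sum_partition_def disjoint_family_on_def by (auto 4 3)

lemma sum_partition_pointwise_Un:
  assumes f: "sum_partition I f s U" and g: "sum_partition I g s' V" and "U \<inter> V = {}"
  shows "sum_partition I (\<lambda>i. f i \<union> g i) (s + s') (U \<union> V)"
proof -
  have fg: "f i \<inter> g j = {}" if "i \<in> I" "j \<in> I" for i j
    using that f g \<open>U \<inter> V = {}\<close> unfolding sum_partition_def by blast
  have "disjoint_family_on (\<lambda>i. f i \<union> g i) I"
    using f g fg unfolding sum_partition_def disjoint_family_on_def
    by (simp add: Int_Un_distrib Int_Un_distrib2 Int_commute)
  then show ?thesis
    using f g fg unfolding sum_partition_def by (auto simp: sum.union_disjoint)
qed

lemma sum_partition_coarsen:
  fixes g :: "'i \<Rightarrow> 'a::comm_semiring_1 set"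
  assumes g: "sum_partition I g s V"
    and P: "disjoint_family_on P J" "(\<Union>j\<in>J. P j) = I" "\<And>j. j \<in> J \<Longrightarrow> finite (P j) \<and> card (P j) = c"
  shows "sum_partition J (\<lambda>j. \<Union>p\<in>P j. g p) (of_nat c * s) V"
  unfolding sum_partition_def
proof (intro conjI ballI)
  show "disjoint_family_on (\<lambda>j. \<Union>p\<in>P j. g p) J"
    unfolding disjoint_family_on_def
  proof (intro ballI impI)
    fix j j' assume "j \<in> J" "j' \<in> J" "j \<noteq> j'"
    then have "p \<noteq> q \<and> p \<in> I \<and> q \<in> I" if "p \<in> P j" "q \<in> P j'" for p q
      using that P(1,2) unfolding disjoint_family_on_def by blast
    then show "(\<Union>p\<in>P j. g p) \<inter> (\<Union>p\<in>P j'. g p) = {}"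
      using g unfolding sum_partition_def disjoint_family_on_def by blast
  qed
  show "(\<Union>j\<in>J. \<Union>p\<in>P j. g p) = V"
    using g P(2) unfolding sum_partition_def by blast
next
  fix j assume j: "j \<in> J"
  have gP: "finite (g p)" "(\<Sum>x\<in>g p. x) = s" if "p \<in> P j" for p
    using that j g P(2) unfolding sum_partition_def by auto
  have "\<forall>p\<in>P j. \<forall>q\<in>P j. p \<noteq> q \<longrightarrow> g p \<inter> g q = {}"
    using j g P(2) unfolding sum_partition_def disjoint_family_on_def by auto
  with gP P(3)[OF j]
  show "finite (\<Union>p\<in>P j. g p)" and "(\<Sum>x\<in>(\<Union>p\<in>P j. g p). x) = of_nat c * s"
    by (simp_all add: sum.UNION_disjoint)
qed

lemma sum_partition_pairs:
  fixes a c d :: int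
  assumes "2 * a \<le> d - c + 1"
  shows "sum_partition {1..a} (\<lambda>i. {c + (i - 1), d - (i - 1)}) (c + d) ({c..c + a - 1} \<union> {d - a + 1..d})"
  unfolding sum_partition_def disjoint_family_on_def
proof (intro conjI ballI impI)
  show "(\<Union>i\<in>{1..a}. {c + (i - 1), d - (i - 1)}) = {c..c + a - 1} \<union> {d - a + 1..d}"
  proof (intro equalityI subsetI)
    fix x assume "x \<in> {c..c + a - 1} \<union> {d - a + 1..d}"
    then consider "c \<le> x" "x \<le> c + a - 1" | "d - a + 1 \<le> x" "x \<le> d" by auto
    then show "x \<in> (\<Union>i\<in>{1..a}. {c + (i - 1), d - (i - 1)})"
    proof cases
      case 1 then show ?thesis by (intro UN_I[of "x - c + 1"]) auto
    next
      case 2 then show ?thesis by (intro UN_I[of "d - x + 1"]) auto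
    qed
  qed auto
qed (use assms in auto)

lemma sum_partition_append:
  fixes f g :: "int \<Rightarrow> 'a::comm_monoid_add set"
  assumes "sum_partition {1..a} f s U" and "sum_partition {1..b} g s V" and "U \<inter> V = {}"
    and "0 \<le> a" and "0 \<le> b"
  shows "sum_partition {1..a + b} (\<lambda>i. if i \<le> a then f i else g (i - a)) s (U \<union> V)"
proof -
  have "bij_betw (\<lambda>i. i - a) {a + 1..a + b} {1..b}"
    by (rule bij_betwI[where g = "\<lambda>i. i + a"]) auto
  then have "sum_partition {a + 1..a + b} (\<lambda>i. g (i - a)) s V"
    using sum_partition_reindex assms(2) unfolding comp_def by blast
  then have "sum_partition ({1..a} \<union> {a + 1..a + b}) (\<lambda>i. if i \<in> {1..a} then f i else g (i - a)) s (U \<union> V)"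
    using sum_partition_Un assms(1,3) by fastforce
  moreover have "{1..a} \<union> {a + 1..a + b} = {1..a + b}" using assms(4,5) by auto
  ultimately show ?thesis
    by (auto elim!: sum_partition_cong)
qed

lemma sum_partition_merge_halves:
  fixes g :: "int \<Rightarrow> 'a::comm_semiring_1 set"
  assumes g: "sum_partition {1..2 * K - 1} g m V" and "m \<notin> V" and "1 \<le> K"
  shows "sum_partition {1..K} (\<lambda>j. if j = 1 then insert m (g 1) else g (2 * j - 2) \<union> g (2 * j - 1))
           (2 * m) (insert m V)"
proof -
  have "sum_partition {0} (\<lambda>_. {m}) m {m}"
    unfolding sum_partition_def disjoint_family_on_def by simp
  then have "sum_partition ({0} \<union> {1..2 * K - 1}) (\<lambda>p. if p \<in> {0} then {m} else g p) m ({m} \<union> V)"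
    using sum_partition_Un g \<open>m \<notin> V\<close> by fastforce
  moreover have "disjoint_family_on (\<lambda>j. {2 * j - 2, 2 * j - 1}) {1..K}"
    unfolding disjoint_family_on_def by auto
  moreover have "(\<Union>j\<in>{1..K}. {2 * j - 2, 2 * j - 1}) = {0} \<union> {1..2 * K - 1}"
  proof (intro equalityI subsetI)
    fix p :: int assume "p \<in> {0} \<union> {1..2 * K - 1}"
    then show "p \<in> (\<Union>j\<in>{1..K}. {2 * j - 2, 2 * j - 1})"
      using \<open>1 \<le> K\<close> by (intro UN_I[of "p div 2 + 1"]) auto
  qed auto
  ultimately have "sum_partition {1..K} (\<lambda>j. \<Union>p\<in>{2 * j - 2, 2 * j - 1}. if p \<in> {0} then {m} else g p)
      (of_nat 2 * m) ({m} \<union> V)"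
    by (intro sum_partition_coarsen) auto
  then show ?thesis
    unfolding of_nat_numeral insert_is_Un[symmetric] by (rule sum_partition_cong) auto
qed

definition kt_partitioning0 :: "int \<Rightarrow> int \<Rightarrow> int \<Rightarrow> int set list \<Rightarrow> bool" where
  "kt_partitioning0 n k t T \<longleftrightarrow>
     length T = nat k \<and>
     (\<forall>i<length T. \<forall>j<length T. i \<noteq> j \<longrightarrow> T ! i \<inter> T ! j = {}) \<and>
     {1..n} \<subseteq> \<Union>(set T) \<and> \<Union>(set T) \<subseteq> {0..n} \<and>
     (\<forall>j<length T. (\<Sum>x\<in>T ! j. x) = t)"

lemma kt_partitioning0_map:
  assumes "sum_partition {1..k} F t U" and "{1..n} \<subseteq> U" and "U \<subseteq> {0..n}"
  shows "kt_partitioning0 n k t (map F [1..k])"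
proof -
  have nth: "map F [1..k] ! j = F (1 + int j)" if "j < length (map F [1..k])" for j
    using that by simp
  have "\<Union>(set (map F [1..k])) = U"
    using assms(1) unfolding sum_partition_def by simp
  with assms nth show ?thesis
    unfolding kt_partitioning0_def sum_partition_def disjoint_family_on_def by auto
qed

lemma kt_partitioning0_finite:
  assumes "kt_partitioning0 n k t T" and "j < length T"
  shows "finite (T ! j)"
  using assms finite_subset[of "T ! j" "{0..n}"] unfolding kt_partitioning0_def
  by (meson Union_upper finite_atLeastAtMost nth_mem order_trans)

lemma sum_partition_nth:
  assumes "kt_partitioning0 n k t T"
  shows "sum_partition {1..k} (\<lambda>i. T ! nat (i - 1)) t (\<Union>(set T))"
proof -
  have len: "length T = nat k" using assms unfolding kt_partitioning0_def by simp
  have T: "T = map (\<lambda>i. T ! nat (i - 1)) [1..k]"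
    by (rule nth_equalityI) (use len in auto)
  have idx: "nat (i - 1) < length T" if "i \<in> {1..k}" for i
    using that len by auto
  have "(\<Union>i\<in>{1..k}. T ! nat (i - 1)) = \<Union>(set T)"
    by (subst (2) T) simp
  moreover have "T ! nat (i - 1) \<inter> T ! nat (j - 1) = {}" if "i \<in> {1..k}" "j \<in> {1..k}" "i \<noteq> j" for i j
    using assms idx[OF that(1)] idx[OF that(2)] that unfolding kt_partitioning0_def by auto
  ultimately show ?thesis
    using assms idx kt_partitioning0_finite[OF assms]
    unfolding kt_partitioning0_def sum_partition_def disjoint_family_on_def by auto
qed

lemma kt_partitioning_remove_zero:
  assumes "kt_partitioning0 n k t T"
  shows "kt_partitioning n (nat k) t (map (\<lambda>S. S - {0}) T)"
proof -
  have "\<Union>(set (map (\<lambda>S. S - {0}) T)) = \<Union>(set T) - {0}" by auto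
  with assms kt_partitioning0_finite[OF assms] show ?thesis
    unfolding kt_partitioning0_def kt_partitioning_def by (auto simp: sum_diff1) blast
qed

text \<open>The value n = -1 arises as t - n - 1 for t = n, and then forces k = 0.\<close>

definition admissible :: "int \<Rightarrow> int \<Rightarrow> int \<Rightarrow> bool" where
  "admissible n k t \<longleftrightarrow> 0 \<le> k \<and> 0 < t \<and> -1 \<le> n \<and> n \<le> t \<and> 2 * (k * t) = n * (n + 1)"

lemma admissible_pos:
  assumes "admissible n k t" and "2 \<le> k"
  shows "1 \<le> n"
proof (rule ccontr)
  assume "\<not> 1 \<le> n"
  with assms have "n = 0 \<or> n = -1" unfolding admissible_def by auto
  with assms have "k * t = 0" unfolding admissible_def by auto
  moreover have "0 < k * t" using assms unfolding admissible_def by simp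
  ultimately show False by linarith
qed

lemma admissible_even_call:
  assumes adm: "admissible n k t" and "2 \<le> k" and tn: "t \<le> 2 * n - 1" and tm: "t = 2 * m"
  shows "admissible (t - n - 1) (2 * (k - n) + t - 1) m" and "n - m < k" and "t - n - 1 < n"
proof -
  have n1: "1 \<le> n" using admissible_pos assms by blast
  have eq: "2 * (k * t) = n * (n + 1)" and nt: "n \<le> t" using adm unfolding admissible_def by auto
  have "t * (2 * (k - (n - m))) = (t - n)^2 + n"
    using eq tm by (simp add: algebra_simps power2_eq_square)
  moreover have "0 < (t - n)^2 + n" using n1 by (simp add: add_nonneg_pos)
  ultimately have "0 < t * (2 * (k - (n - m)))" by simp
  then show "n - m < k" using nt n1 by (simp add: zero_less_mult_iff)
  with tm tn nt n1 eq show "admissible (t - n - 1) (2 * (k - n) + t - 1) m"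
    unfolding admissible_def by (auto simp: algebra_simps)
  show "t - n - 1 < n" using tn by simp
qed

lemma admissible_odd_call:
  assumes adm: "admissible n k t" and "2 \<le> k" and tn: "t \<le> 2 * n - 1" and tm: "t = 2 * m + 1"
  shows "admissible (t - n - 1) (k - (n - m)) t" and "n - m \<le> k" and "t - n - 1 < n"
proof -
  have n1: "1 \<le> n" using admissible_pos assms by blast
  have eq: "2 * (k * t) = n * (n + 1)" and nt: "n \<le> t" and t0: "0 < t"
    using adm unfolding admissible_def by auto
  have key: "2 * ((k - (n - m)) * t) = (t - n - 1) * (t - n - 1 + 1)"
    using eq tm by (simp add: algebra_simps)
  moreover have "0 \<le> (t - n - 1) * (t - n - 1 + 1)" using nt by (cases "t = n") auto
  ultimately have "0 \<le> (k - (n - m)) * t" by simp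
  then show "n - m \<le> k" using t0 by (simp add: zero_le_mult_iff)
  with key nt t0 n1 show "admissible (t - n - 1) (k - (n - m)) t"
    unfolding admissible_def by auto
  show "t - n - 1 < n" using tn by simp
qed

lemma admissible_big_call:
  assumes adm: "admissible n k t" and k2: "2 \<le> k" and tn: "2 * n \<le> t"
  shows "admissible (n - 2 * k) k (t - 2 * (n - k) - 1)" and "n - 2 * k < n"
proof -
  have n1: "1 \<le> n" using admissible_pos assms by blast
  have eq: "2 * (k * t) = n * (n + 1)" and t0: "0 < t" using adm unfolding admissible_def by auto
  have "n * (4 * k) \<le> n * (n + 1)"
    using eq mult_left_mono[OF tn, of "2 * k"] k2 by (simp add: algebra_simps)
  then have "4 * k \<le> n + 1" using n1 by simp
  moreover have "t * ((t - 2 * (n - k) - 1) - (n - 2 * k)) = (t - 2 * n) * (t - n - 1)"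
    using eq by (simp add: algebra_simps)
  then have "0 \<le> t * ((t - 2 * (n - k) - 1) - (n - 2 * k))" using tn n1 by simp
  then have "n - 2 * k \<le> t - 2 * (n - k) - 1" using t0 by (simp add: zero_le_mult_iff)
  ultimately show "admissible (n - 2 * k) k (t - 2 * (n - k) - 1)"
    using eq k2 tn unfolding admissible_def by (auto simp: algebra_simps)
  show "n - 2 * k < n" using k2 by simp
qed

lemma double_sum_atLeastAtMost_int: "0 \<le> n \<Longrightarrow> 2 * (\<Sum>x\<in>{1..n::int}. x) = n * (n + 1)"
proof (induction n rule: int_ge_induct)
  case (step i)
  then have "{1..i + 1} = insert (i + 1) {1..i}" by auto
  with step show ?case by (simp add: algebra_simps)
qed simp

lemma kt_partitioning0_even_step:
  assumes S: "kt_partitioning0 (t - n - 1) (2 * (k - n) + t - 1) (t div 2) S"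
    and adm: "admissible n k t" and "2 \<le> k" and tn: "t \<le> 2 * n - 1" and "even t"
    and a: "a = (2 * n - t) div 2"
  shows "kt_partitioning0 n k t
           (map (\<lambda>i. if i \<le> a then {t - n + (i - 1), n - (i - 1)}
                     else if i = a + 1 then {t div 2} \<union> S ! 0
                     else S ! nat (2 * (i - a) - 3) \<union> S ! nat (2 * (i - a) - 2)) [1..k])"
proof -
  obtain m where tm: "t = 2 * m" using \<open>even t\<close> by blast
  have am: "a = n - m" and tdiv: "t div 2 = m" using a tm by simp_all
  note call = admissible_even_call[OF adm \<open>2 \<le> k\<close> tn tm]
  have nt: "n \<le> t" using adm unfolding admissible_def by simp
  let ?g = "\<lambda>i. S ! nat (i - 1)" and ?V = "\<Union>(set S)"
  have V: "{1..t - n - 1} \<subseteq> ?V" "?V \<subseteq> {0..t - n - 1}"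
    using S unfolding kt_partitioning0_def by auto
  have K: "2 * (k - n) + t - 1 = 2 * (k - a) - 1" using am tm by simp
  have "sum_partition {1..2 * (k - a) - 1} ?g m ?V"
    using sum_partition_nth[OF S] unfolding K tdiv .
  then have halves: "sum_partition {1..k - a}
      (\<lambda>j. if j = 1 then insert m (?g 1) else ?g (2 * j - 2) \<union> ?g (2 * j - 1)) t (insert m ?V)"
    using sum_partition_merge_halves[of "k - a" ?g m ?V] V tm tn call(2) am by fastforce
  have pairs: "sum_partition {1..a} (\<lambda>i. {t - n + (i - 1), n - (i - 1)}) t ({t - n..m - 1} \<union> {m + 1..n})"
    using sum_partition_pairs[where a = a and c = "t - n" and d = n] am tm by simp
  have "sum_partition {1..a + (k - a)} (\<lambda>i. if i \<le> a then {t - n + (i - 1), n - (i - 1)}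
      else if i - a = 1 then insert m (?g 1) else ?g (2 * (i - a) - 2) \<union> ?g (2 * (i - a) - 1))
      t (({t - n..m - 1} \<union> {m + 1..n}) \<union> insert m ?V)"
    by (rule sum_partition_append[OF pairs halves]) (use V am tm tn call(2) in auto)
  then have fam: "sum_partition {1..k} (\<lambda>i. if i \<le> a then {t - n + (i - 1), n - (i - 1)}
      else if i - a = 1 then insert m (?g 1) else ?g (2 * (i - a) - 2) \<union> ?g (2 * (i - a) - 1))
      t (({t - n..m - 1} \<union> {m + 1..n}) \<union> insert m ?V)"
    by simp
  have idx: "nat (2 * (i - a) - 2 - 1) = nat (2 * (i - a) - 3)" for i by simp
  have "0 \<le> t - n" "m \<le> n" using nt tn tm by simp_all
  then have "{1..n} \<subseteq> {1..t - n - 1} \<union> ({t - n..m - 1} \<union> {m + 1..n}) \<union> {m}" by auto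
  then have cover: "{1..n} \<subseteq> ({t - n..m - 1} \<union> {m + 1..n}) \<union> insert m ?V" using V(1) by blast
  have bound: "({t - n..m - 1} \<union> {m + 1..n}) \<union> insert m ?V \<subseteq> {0..n}"
    using V(2) \<open>0 \<le> t - n\<close> \<open>m \<le> n\<close> tm by auto
  show ?thesis
    by (rule kt_partitioning0_map[OF sum_partition_cong[OF fam] cover bound])
      (use idx tdiv in \<open>auto simp: eq_diff_eq\<close>)
qed

lemma kt_partitioning0_odd_step:
  assumes S: "kt_partitioning0 (t - n - 1) (k - a) t S"
    and adm: "admissible n k t" and "2 \<le> k" and tn: "t \<le> 2 * n - 1" and "odd t"
    and a: "a = (2 * n - t + 1) div 2"
  shows "kt_partitioning0 n k t
           (map (\<lambda>i. if i \<le> a then {t - n + (i - 1), n - (i - 1)} else S ! nat (i - a - 1)) [1..k])"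
proof -
  obtain m where tm: "t = 2 * m + 1" using \<open>odd t\<close> by (blast elim: oddE)
  have am: "a = n - m" using a tm by simp
  have nt: "n \<le> t" using adm unfolding admissible_def by simp
  have ka: "a \<le> k" using admissible_odd_call(2)[OF adm \<open>2 \<le> k\<close> tn tm] am by simp
  let ?V = "\<Union>(set S)"
  have V: "{1..t - n - 1} \<subseteq> ?V" "?V \<subseteq> {0..t - n - 1}"
    using S unfolding kt_partitioning0_def by auto
  have pairs: "sum_partition {1..a} (\<lambda>i. {t - n + (i - 1), n - (i - 1)}) t ({t - n..m} \<union> {m + 1..n})"
    using sum_partition_pairs[where a = a and c = "t - n" and d = n] am tm by simp
  have "sum_partition {1..a + (k - a)} (\<lambda>i. if i \<le> a then {t - n + (i - 1), n - (i - 1)}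
      else S ! nat (i - a - 1)) t (({t - n..m} \<union> {m + 1..n}) \<union> ?V)"
    by (rule sum_partition_append[OF pairs sum_partition_nth[OF S]]) (use V am tm tn ka in auto)
  then have fam: "sum_partition {1..k} (\<lambda>i. if i \<le> a then {t - n + (i - 1), n - (i - 1)}
      else S ! nat (i - a - 1)) t (({t - n..m} \<union> {m + 1..n}) \<union> ?V)"
    by simp
  have "0 \<le> t - n" "m < n" using nt tn tm by simp_all
  then have "{1..n} \<subseteq> {1..t - n - 1} \<union> ({t - n..m} \<union> {m + 1..n})" by auto
  then have cover: "{1..n} \<subseteq> ({t - n..m} \<union> {m + 1..n}) \<union> ?V" using V(1) by blast
  have "{t - n..m} \<union> {m + 1..n} \<subseteq> {0..n}" "{0..t - n - 1} \<subseteq> {0..n}"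
    using \<open>0 \<le> t - n\<close> \<open>m < n\<close> tn tm by auto
  then have bound: "({t - n..m} \<union> {m + 1..n}) \<union> ?V \<subseteq> {0..n}" using V(2) by blast
  show ?thesis by (rule kt_partitioning0_map[OF fam cover bound])
qed

lemma kt_partitioning0_big_step:
  assumes S: "kt_partitioning0 (n - 2 * k) k (t - 2 * (n - k) - 1) S"
    and adm: "admissible n k t" and "2 \<le> k" and tn: "2 * n \<le> t"
  shows "kt_partitioning0 n k t (map (\<lambda>i. {n - 2 * k + i, n - (i - 1)} \<union> S ! nat (i - 1)) [1..k])"
proof -
  have n2k: "-1 \<le> n - 2 * k"
    using admissible_big_call(1)[OF adm \<open>2 \<le> k\<close> tn] unfolding admissible_def by simp
  let ?V = "\<Union>(set S)"
  have V: "{1..n - 2 * k} \<subseteq> ?V" "?V \<subseteq> {0..n - 2 * k}"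
    using S unfolding kt_partitioning0_def by auto
  have "sum_partition {1..k} (\<lambda>i. {n - 2 * k + 1 + (i - 1), n - (i - 1)}) (n - 2 * k + 1 + n)
      ({n - 2 * k + 1..n - 2 * k + 1 + k - 1} \<union> {n - k + 1..n})"
    by (rule sum_partition_pairs) simp
  moreover have "{n - 2 * k + 1..n - 2 * k + 1 + k - 1} \<union> {n - k + 1..n} = {n - 2 * k + 1..n}"
    using \<open>2 \<le> k\<close> by auto
  ultimately have pairs: "sum_partition {1..k} (\<lambda>i. {n - 2 * k + 1 + (i - 1), n - (i - 1)})
      (n - 2 * k + 1 + n) {n - 2 * k + 1..n}"
    by simp
  have "sum_partition {1..k} (\<lambda>i. {n - 2 * k + 1 + (i - 1), n - (i - 1)} \<union> S ! nat (i - 1))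
      (n - 2 * k + 1 + n + (t - 2 * (n - k) - 1)) ({n - 2 * k + 1..n} \<union> ?V)"
    by (rule sum_partition_pointwise_Un[OF pairs sum_partition_nth[OF S]]) (use V in auto)
  then have fam: "sum_partition {1..k} (\<lambda>i. {n - 2 * k + i, n - (i - 1)} \<union> S ! nat (i - 1))
      t ({n - 2 * k + 1..n} \<union> ?V)"
    by (simp add: algebra_simps)
  have "{1..n} \<subseteq> {1..n - 2 * k} \<union> {n - 2 * k + 1..n}" by auto
  then have cover: "{1..n} \<subseteq> {n - 2 * k + 1..n} \<union> ?V" using V(1) by blast
  have "{n - 2 * k + 1..n} \<subseteq> {0..n}" "{0..n - 2 * k} \<subseteq> {0..n}" using n2k \<open>2 \<le> k\<close> by auto
  then have bound: "{n - 2 * k + 1..n} \<union> ?V \<subseteq> {0..n}" using V(2) by blast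
  show ?thesis by (rule kt_partitioning0_map[OF fam cover bound])
qed

lemma pisolve_kt_partitioning0:
  assumes "pisolve n k t T" and "admissible n k t"
  shows "kt_partitioning0 n k t T"
  using assms
proof (induction rule: pisolve.induct)
  case (base0 n t)
  then have "n \<le> 0" unfolding admissible_def by (auto simp: mult_eq_0_iff)
  then show ?case unfolding kt_partitioning0_def by simp
next
  case (base1 n t)
  then have "n * (n + 1) = 2 * t" "0 < t" "-1 \<le> n" unfolding admissible_def by auto
  then have "0 \<le> n" by (cases "n = -1") auto
  with \<open>n * (n + 1) = 2 * t\<close> have "(\<Sum>x\<in>{1..n}. x) = t"
    using double_sum_atLeastAtMost_int[of n] by simp
  with \<open>0 \<le> n\<close> show ?case unfolding kt_partitioning0_def by auto
next
  case (even k t n a S)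
  then have "2 \<le> k" unfolding admissible_def by simp
  obtain m where tm: "t = 2 * m" using \<open>even t\<close> by blast
  then have "admissible (t - n - 1) (2 * (k - n) + t - 1) (t div 2)"
    using admissible_even_call(1)[OF even.prems \<open>2 \<le> k\<close> even.hyps(3)] by simp
  then show ?case
    using kt_partitioning0_even_step[OF even.IH even.prems \<open>2 \<le> k\<close> even.hyps(3,4,5)] by blast
next
  case (odd k t n a S)
  then have "2 \<le> k" unfolding admissible_def by simp
  obtain m where tm: "t = 2 * m + 1" using \<open>odd t\<close> by (blast elim: oddE)
  then have "admissible (t - n - 1) (k - a) t"
    using admissible_odd_call(1)[OF odd.prems \<open>2 \<le> k\<close> odd.hyps(3)] odd.hyps(5) by simp
  then show ?case
    using kt_partitioning0_odd_step[OF odd.IH odd.prems \<open>2 \<le> k\<close> odd.hyps(3,4,5)] by blast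
next
  case (big k t n S)
  then have "2 \<le> k" unfolding admissible_def by simp
  then show ?case
    using kt_partitioning0_big_step[OF big.IH big.prems \<open>2 \<le> k\<close> big.hyps(3)]
      admissible_big_call(1)[OF big.prems \<open>2 \<le> k\<close> big.hyps(3)] by blast
qed

lemma admissible_pisolve_exists:
  assumes "admissible n k t"
  shows "\<exists>T. pisolve n k t T"
  using assms
proof (induction "nat (n + 1)" arbitrary: n k t rule: less_induct)
  case less
  have rec: "\<exists>S. pisolve n' k' t' S" if "admissible n' k' t'" "n' < n" for n' k' t'
    using less.hyps[OF _ that(1)] that unfolding admissible_def by simp
  consider "k = 0" | "k = 1" | "2 \<le> k" using less.prems unfolding admissible_def by linarith
  then show ?case
  proof cases
    case 3
    then have "k \<noteq> 0" "k \<noteq> 1" by simp_all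
    consider (even) m where "t \<le> 2 * n - 1" "t = 2 * m" | (odd) m where "t \<le> 2 * n - 1" "t = 2 * m + 1"
      | (big) "2 * n \<le> t"
      by (metis evenE linorder_not_le oddE zle_diff1_eq)
    then show ?thesis
    proof cases
      case even
      note call = admissible_even_call[OF less.prems 3 even]
      have "t div 2 = m" "even t" using even by simp_all
      with rec[OF call(1,3)] obtain S where "pisolve (t - n - 1) (2 * (k - n) + t - 1) (t div 2) S"
        by auto
      then show ?thesis using pisolve.even[OF \<open>k \<noteq> 0\<close> \<open>k \<noteq> 1\<close> even(1) \<open>even t\<close> refl] by blast
    next
      case odd
      note call = admissible_odd_call[OF less.prems 3 odd]
      have "(2 * n - t + 1) div 2 = n - m" "odd t" using odd by simp_all
      with rec[OF call(1,3)] obtain S where "pisolve (t - n - 1) (k - (2 * n - t + 1) div 2) t S"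
        by auto
      then show ?thesis using pisolve.odd[OF \<open>k \<noteq> 0\<close> \<open>k \<noteq> 1\<close> odd(1) \<open>odd t\<close> refl] by blast
    next
      case big
      note call = admissible_big_call[OF less.prems 3 big]
      from rec[OF call] obtain S where "pisolve (n - 2 * k) k (t - 2 * (n - k) - 1) S" by blast
      then show ?thesis using pisolve.big[OF \<open>k \<noteq> 0\<close> \<open>k \<noteq> 1\<close> big] by blast
    qed
  qed (use pisolve.base0 pisolve.base1 in blast)+
qed

theorem mainTheorem1:
  fixes n k t :: int
  assumes "n > 0" and "k > 0" and "t > 0"
    and "2 * (k * t) = n * (n + 1)"
    and "t \<ge> n"
  shows "(\<exists>T. pisolve n k t T) \<and>
         (\<forall>T. pisolve n k t T \<longrightarrow>
              length T = nat k \<and>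
              (\<forall>i<length T. \<forall>j<length T. i \<noteq> j \<longrightarrow> T ! i \<inter> T ! j = {}) \<and>
              {1..n} \<subseteq> \<Union>(set T) \<and> \<Union>(set T) \<subseteq> {0..n} \<and>
              (\<forall>j<length T. (\<Sum>x\<in>T ! j. x) = t) \<and>
              kt_partitioning n (nat k) t (map (\<lambda>S. S - {0}) T))"
proof -
  have adm: "admissible n k t" using assms unfolding admissible_def by simp
  have "kt_partitioning0 n k t T \<and> kt_partitioning n (nat k) t (map (\<lambda>S. S - {0}) T)"
    if "pisolve n k t T" for T
    using pisolve_kt_partitioning0[OF that adm] kt_partitioning_remove_zero by blast
  with admissible_pisolve_exists[OF adm] show ?thesis
    unfolding kt_partitioning0_def by blast
qed

end
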